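(* Let $H$ be a connected graph, let $r\ge 2$, and let $G=H\circ rK_1$. Then $T\subseteq V(G)$ is a $\operatorname{Z}$-irrelevant set of $G$ if and only if $T\subseteq V(H)$.
   Context: Zero forcing on a graph $G$: starting with a set $S$ of blue vertices (others white), a blue vertex $v$ may change a white vertex $w$ to blue if $w$ is the only white neighbor of $v$; $S$ is a zero forcing set if repeated application colors all of $V(G)$ blue. A vertex $v$ is $\operatorname{Z}$-irrelevant if $v$ belongs to no minimal (under inclusion) zero forcing set of $G$; a set is $\operatorname{Z}$-irrelevant if all its vertices are. $rK_1$ is the graph of $r$ isolated vertices. The corona $H\circ F$ is obtained from $H$ by taking, for each $v\in V(H)$, a disjoint copy $F_v$ of $F$ and joining $v$ to every vertex of $F_v$; thus $H\circ rK_1$ attaches $r$ pendant leaves to each vertex of $H$. *)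

theory Defs
  imports Main
begin

definition simple_graph :: "'a set \<Rightarrow> ('a \<Rightarrow> 'a \<Rightarrow> bool) \<Rightarrow> bool" where
  "simple_graph V E \<longleftrightarrow> finite V \<and> (\<forall>u v. E u v \<longrightarrow> u \<in> V \<and> v \<in> V)
     \<and> (\<forall>u v. E u v \<longrightarrow> E v u) \<and> (\<forall>v. \<not> E v v)"

definition connected_graph :: "'a set \<Rightarrow> ('a \<Rightarrow> 'a \<Rightarrow> bool) \<Rightarrow> bool" where
  "connected_graph V E \<longleftrightarrow> simple_graph V E \<and> V \<noteq> {}
     \<and> (\<forall>u\<in>V. \<forall>v\<in>V. E\<^sup>*\<^sup>* u v)"

text \<open>Since blue vertices stay blue, the
final colouring is the least set closed under the rule.\<close>

inductive_set zf_closure :: "'a set \<Rightarrow> ('a \<Rightarrow> 'a \<Rightarrow> bool) \<Rightarrow> 'a set \<Rightarrow> 'a set"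
  for V E S where
  init: "x \<in> S \<Longrightarrow> x \<in> V \<Longrightarrow> x \<in> zf_closure V E S"
| force: "v \<in> zf_closure V E S \<Longrightarrow> w \<in> V \<Longrightarrow> E v w \<Longrightarrow>
          (\<forall>u\<in>V. E v u \<and> u \<noteq> w \<longrightarrow> u \<in> zf_closure V E S) \<Longrightarrow>
          w \<in> zf_closure V E S"

definition zero_forcing_set :: "'a set \<Rightarrow> ('a \<Rightarrow> 'a \<Rightarrow> bool) \<Rightarrow> 'a set \<Rightarrow> bool" where
  "zero_forcing_set V E S \<longleftrightarrow> S \<subseteq> V \<and> zf_closure V E S = V"

definition minimal_zero_forcing_set :: "'a set \<Rightarrow> ('a \<Rightarrow> 'a \<Rightarrow> bool) \<Rightarrow> 'a set \<Rightarrow> bool" where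
  "minimal_zero_forcing_set V E S \<longleftrightarrow> zero_forcing_set V E S
     \<and> (\<forall>S'. S' \<subset> S \<longrightarrow> \<not> zero_forcing_set V E S')"

definition Z_irrelevant_vertex :: "'a set \<Rightarrow> ('a \<Rightarrow> 'a \<Rightarrow> bool) \<Rightarrow> 'a \<Rightarrow> bool" where
  "Z_irrelevant_vertex V E v \<longleftrightarrow> v \<in> V \<and> (\<forall>S. minimal_zero_forcing_set V E S \<longrightarrow> v \<notin> S)"

definition Z_irrelevant_set :: "'a set \<Rightarrow> ('a \<Rightarrow> 'a \<Rightarrow> bool) \<Rightarrow> 'a set \<Rightarrow> bool" where
  "Z_irrelevant_set V E T \<longleftrightarrow> T \<subseteq> V \<and> (\<forall>v\<in>T. Z_irrelevant_vertex V E v)"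

text \<open>Corona H \<circ> rK_1: vertex Inl v is the copy of v \<in> V(H); Inr (v,i), i < r,
are the r pendant leaves attached to v.\<close>

definition corona_rK1_verts :: "'a set \<Rightarrow> nat \<Rightarrow> ('a + 'a \<times> nat) set" where
  "corona_rK1_verts V r = Inl ` V \<union> Inr ` (V \<times> {..<r})"

fun corona_rK1_edge :: "('a \<Rightarrow> 'a \<Rightarrow> bool) \<Rightarrow> 'a set \<Rightarrow> nat \<Rightarrow>
    ('a + 'a \<times> nat) \<Rightarrow> ('a + 'a \<times> nat) \<Rightarrow> bool" where
  "corona_rK1_edge E V r (Inl u) (Inl v) = E u v"
| "corona_rK1_edge E V r (Inl u) (Inr (v, i)) = (u = v \<and> u \<in> V \<and> i < r)"
| "corona_rK1_edge E V r (Inr (v, i)) (Inl u) = (u = v \<and> u \<in> V \<and> i < r)"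
| "corona_rK1_edge E V r (Inr _) (Inr _) = False"

end

theory Submission
  imports Defs
begin

text \<open>For \<open>r \<ge> 2\<close> a set of vertices of \<open>H \<circ> rK\<^sub>1\<close> is zero forcing exactly when it
contains all but at most one leaf at every vertex of \<open>H\<close>: two white leaves at the same
vertex are false twins and can never be forced, while otherwise each vertex of \<open>H\<close> is
forced by one of its blue leaves and then forces its last white leaf.  Vertices of \<open>H\<close>
are therefore superfluous in a zero forcing set, so they lie in no minimal one, whereas
any leaf lies in the minimal zero forcing set that omits, at every vertex of \<open>H\<close>, a
single fixed other leaf.\<close>

lemma zf_closure_subset: "zf_closure V E S \<subseteq> V"
  by (auto elim: zf_closure.induct)

lemma false_twin_not_in_zf_closure:
  assumes "w \<in> V" "w' \<in> V" "w \<noteq> w'" "w \<notin> S" "w' \<notin> S"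
    and twins: "\<And>v. E v w \<longleftrightarrow> E v w'"
  shows "w \<notin> zf_closure V E S"
proof -
  have "x \<notin> {w, w'}" if "x \<in> zf_closure V E S" for x
    using that
  proof (induction rule: zf_closure.induct)
    case (init x)
    then show ?case using assms by auto
  next
    case (force v x)
    show ?case
    proof
      assume "x \<in> {w, w'}"
      then obtain y where "y \<in> {w, w'}" "y \<noteq> x" "y \<in> V" "E v y"
        using assms(1-3) twins force.hyps(3) by auto
      then show False using force by auto
    qed
  qed
  then show ?thesis by blast
qed

definition misses_at_most_one_leaf :: "'a set \<Rightarrow> nat \<Rightarrow> ('a + 'a \<times> nat) set \<Rightarrow> bool" where
  "misses_at_most_one_leaf V r S \<longleftrightarrow>
     (\<forall>u\<in>V. \<forall>j<r. \<forall>j'<r. j \<noteq> j' \<longrightarrow> Inr (u, j) \<in> S \<or> Inr (u, j') \<in> S)"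

lemma corona_zero_forcing_set_misses_at_most_one_leaf:
  assumes "zero_forcing_set (corona_rK1_verts V r) (corona_rK1_edge E V r) S"
  shows "misses_at_most_one_leaf V r S"
  unfolding misses_at_most_one_leaf_def
proof (intro ballI allI impI)
  fix u j j' assume u: "u \<in> V" and jj': "j < r" "j' < r" "j \<noteq> j'"
  have leaves: "Inr (u, j) \<in> corona_rK1_verts V r" "Inr (u, j') \<in> corona_rK1_verts V r"
    using u jj' by (auto simp: corona_rK1_verts_def)
  show "Inr (u, j) \<in> S \<or> Inr (u, j') \<in> S"
  proof (rule ccontr)
    assume "\<not> (Inr (u, j) \<in> S \<or> Inr (u, j') \<in> S)"
    then have "Inr (u, j) \<notin> zf_closure (corona_rK1_verts V r) (corona_rK1_edge E V r) S"
      using leaves jj'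
      by (intro false_twin_not_in_zf_closure[of _ _ "Inr (u, j')"])
        (auto elim: corona_rK1_edge.elims)
    then show False
      using leaves(1) assms by (auto simp: zero_forcing_set_def)
  qed
qed

lemma corona_zero_forcing_setI:
  assumes "r \<ge> 2" "S \<subseteq> corona_rK1_verts V r" and cover: "misses_at_most_one_leaf V r S"
  shows "zero_forcing_set (corona_rK1_verts V r) (corona_rK1_edge E V r) S"
proof -
  let ?VG = "corona_rK1_verts V r" and ?EG = "corona_rK1_edge E V r"
  let ?C = "zf_closure ?VG ?EG S"
  have one_of_two_leaves: "Inr (u, j) \<in> S \<or> Inr (u, j') \<in> S"
    if "u \<in> V" "j < r" "j' < r" "j \<noteq> j'" for u j j'
    using cover that by (auto simp: misses_at_most_one_leaf_def)
  have centre: "Inl u \<in> ?C" if u: "u \<in> V" for u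
  proof -
    have "0 < r" "1 < r" using assms(1) by auto
    then obtain j where j: "j < r" "Inr (u, j) \<in> S"
      using one_of_two_leaves[OF u, of 0 1] by auto
    then have "Inr (u, j) \<in> ?C"
      using u by (intro zf_closure.init) (auto simp: corona_rK1_verts_def)
    then show ?thesis
      by (rule zf_closure.force)
        (use u j in \<open>auto simp: corona_rK1_verts_def elim: corona_rK1_edge.elims\<close>)
  qed
  have leaf: "Inr (u, j) \<in> ?C" if u: "u \<in> V" and j: "j < r" for u j
  proof (cases "Inr (u, j) \<in> S")
    case True
    then show ?thesis using u j by (intro zf_closure.init) (auto simp: corona_rK1_verts_def)
  next
    case False
    have other_leaves: "x \<in> ?C" if x: "x \<in> ?VG" "?EG (Inl u) x" "x \<noteq> Inr (u, j)" for x
    proof (cases x)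
      case (Inl y)
      then show ?thesis using x centre by (auto simp: corona_rK1_verts_def)
    next
      case (Inr p)
      then obtain k where "x = Inr (u, k)" "k < r" "k \<noteq> j"
        using x Inr by (cases p) auto
      then show ?thesis
        using one_of_two_leaves[OF u j, of k] False x(1) by (auto intro: zf_closure.init)
    qed
    show ?thesis
      by (rule zf_closure.force[OF centre[OF u]])
        (use u j other_leaves in \<open>auto simp: corona_rK1_verts_def\<close>)
  qed
  have "?VG \<subseteq> ?C"
    using centre leaf by (auto simp: corona_rK1_verts_def)
  then show ?thesis
    using zf_closure_subset[of ?VG ?EG S] assms(2) by (auto simp: zero_forcing_set_def)
qed

lemma corona_minimal_zero_forcing_set_leaves_only:
  assumes "r \<ge> 2" "minimal_zero_forcing_set (corona_rK1_verts V r) (corona_rK1_edge E V r) S"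
  shows "S \<subseteq> range Inr"
proof -
  have zfs: "zero_forcing_set (corona_rK1_verts V r) (corona_rK1_edge E V r) S"
    using assms(2) by (simp add: minimal_zero_forcing_set_def)
  then have "misses_at_most_one_leaf V r S"
    by (rule corona_zero_forcing_set_misses_at_most_one_leaf)
  then have "zero_forcing_set (corona_rK1_verts V r) (corona_rK1_edge E V r) (S - range Inl)"
    using assms(1) zfs
    by (intro corona_zero_forcing_setI) (auto simp: zero_forcing_set_def misses_at_most_one_leaf_def)
  then have "\<not> S - range Inl \<subset> S"
    using assms(2) unfolding minimal_zero_forcing_set_def by blast
  then have "S - range Inl = S"
    by blast
  then show ?thesis
    by (metis Diff_iff rangeI subsetI sum.exhaust)
qed

lemma corona_leaf_in_minimal_zero_forcing_set:
  assumes "r \<ge> 2" "v \<in> V" "i < r"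
  obtains S where "minimal_zero_forcing_set (corona_rK1_verts V r) (corona_rK1_edge E V r) S"
    and "Inr (v, i) \<in> S"
proof -
  define c :: nat where "c = (if i = 0 then 1 else 0)"
  have c: "c < r" "c \<noteq> i" using assms(1) by (auto simp: c_def)
  define S :: "('a + 'a \<times> nat) set" where "S = Inr ` (V \<times> ({..<r} - {c}))"
  have "zero_forcing_set (corona_rK1_verts V r) (corona_rK1_edge E V r) S"
    using assms(1) by (intro corona_zero_forcing_setI)
      (auto simp: S_def corona_rK1_verts_def misses_at_most_one_leaf_def)
  moreover have "\<not> zero_forcing_set (corona_rK1_verts V r) (corona_rK1_edge E V r) S'"
    if "S' \<subset> S" for S'
  proof
    assume "zero_forcing_set (corona_rK1_verts V r) (corona_rK1_edge E V r) S'"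
    then have cover: "misses_at_most_one_leaf V r S'"
      by (rule corona_zero_forcing_set_misses_at_most_one_leaf)
    obtain u k where "Inr (u, k) \<notin> S'" "u \<in> V" "k < r" "k \<noteq> c"
      using \<open>S' \<subset> S\<close> by (auto simp: S_def)
    moreover have "Inr (u, c) \<notin> S'" using \<open>S' \<subset> S\<close> by (auto simp: S_def)
    ultimately show False
      using cover c(1) by (auto simp: misses_at_most_one_leaf_def)
  qed
  moreover have "Inr (v, i) \<in> S" using assms c by (auto simp: S_def)
  ultimately show ?thesis
    by (intro that) (auto simp: minimal_zero_forcing_set_def)
qed

theorem proposition2p20:
  fixes V :: "'a set" and E :: "'a \<Rightarrow> 'a \<Rightarrow> bool" and r :: nat
    and T :: "('a + 'a \<times> nat) set"
  assumes "connected_graph V E"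
    and "r \<ge> 2"
    and "T \<subseteq> corona_rK1_verts V r"
  shows "Z_irrelevant_set (corona_rK1_verts V r) (corona_rK1_edge E V r) T
         \<longleftrightarrow> T \<subseteq> Inl ` V"
proof
  assume irrelevant: "Z_irrelevant_set (corona_rK1_verts V r) (corona_rK1_edge E V r) T"
  show "T \<subseteq> Inl ` V"
  proof
    fix x assume "x \<in> T"
    show "x \<in> Inl ` V"
    proof (rule ccontr)
      assume "x \<notin> Inl ` V"
      with \<open>x \<in> T\<close> assms(3) obtain v i where "x = Inr (v, i)" "v \<in> V" "i < r"
        by (auto simp: corona_rK1_verts_def)
      then show False
        using corona_leaf_in_minimal_zero_forcing_set[OF assms(2)] irrelevant \<open>x \<in> T\<close>
        by (metis Z_irrelevant_set_def Z_irrelevant_vertex_def)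
    qed
  qed
next
  assume "T \<subseteq> Inl ` V"
  then show "Z_irrelevant_set (corona_rK1_verts V r) (corona_rK1_edge E V r) T"
    using assms(3) corona_minimal_zero_forcing_set_leaves_only[OF assms(2)]
    by (fastforce simp: Z_irrelevant_set_def Z_irrelevant_vertex_def)
qed

end
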